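(* Let $b \geq 2$ be an integer and let $A_b \subseteq \mathbb{N}$ be the set of all natural numbers whose base-$b$ representation begins with the digit $1$. Then $A_b$ is fractionally dense if $b \in \{2,3,4\}$, and $A_b$ is not fractionally dense if $b \geq 5$.
   Context: $\mathbb{N} = \{1,2,3,\ldots\}$. For $A \subseteq \mathbb{N}$, the quotient set is $R(A) = \{a/a' : a, a' \in A\}$. A set $A \subseteq \mathbb{N}$ is called fractionally dense if the closure of $R(A)$ in $\mathbb{R}$ equals $[0,\infty)$. *)

theory Defs
  imports "HOL-Analysis.Analysis"
begin

definition ratio_set :: "nat set \<Rightarrow> real set" where
  "ratio_set A = {real a / real a' | a a'. a \<in> A \<and> a' \<in> A}"

definition fractionally_dense :: "nat set \<Rightarrow> bool" where
  "fractionally_dense A \<longleftrightarrow> closure (ratio_set A) = {0..}"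

definition leading_digit :: "nat \<Rightarrow> nat \<Rightarrow> nat" where
  "leading_digit b n = n div b ^ (THE k. b ^ k \<le> n \<and> n < b ^ Suc k)"

definition A_set :: "nat \<Rightarrow> nat set" where
  "A_set b = {n. n \<ge> 1 \<and> leading_digit b n = 1}"

end

theory Submission
  imports Defs
begin

text \<open>
  \<open>A_b\<close> is the union of the blocks \<open>[b^k, 2 b^k)\<close>. A quotient of an element of one block
  by an element of a block at least as high is below \<open>2\<close>; by an element of a strictly
  lower block it is at least \<open>b/2\<close>. For \<open>b \<ge> 5\<close> the closure of the quotient set therefore
  misses \<open>(2, b/2)\<close>.

  For every \<open>b\<close>, the quotients \<open>\<lfloor>y b^n\<rfloor> / b^n\<close> approximate each \<open>y \<in> [1, 2]\<close>, and the
  closure of the quotient set is stable under \<open>x \<mapsto> 1/x\<close> and, since \<open>b A_b \<subseteq> A_b\<close>, under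
  \<open>x \<mapsto> b x\<close>. So it contains \<open>[1/2, 2]\<close>, and when \<open>b \<le> 4\<close> the interval \<open>[1/2, b/2]\<close>
  inside it has multiples by powers of \<open>b\<close> covering \<open>[1/2, \<infinity>)\<close>; inversion fills the rest.
\<close>

lemma leading_digit_eq:
  fixes b n k :: nat
  assumes "2 \<le> b" "b ^ k \<le> n" "n < b ^ Suc k"
  shows "leading_digit b n = n div b ^ k"
proof -
  have "j = k" if "b ^ j \<le> n" "n < b ^ Suc j" for j
  proof -
    have "1 < b" "b ^ j < b ^ Suc k" "b ^ k < b ^ Suc j"
      using assms that by linarith+
    then have "j < Suc k" "k < Suc j"
      using power_less_imp_less_exp by blast+
    then show ?thesis
      by simp
  qed
  then have "(THE j. b ^ j \<le> n \<and> n < b ^ Suc j) = k"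
    using assms by (intro the_equality) blast+
  then show ?thesis
    by (simp add: leading_digit_def)
qed

lemma mem_A_set_iff:
  fixes b n :: nat
  assumes "2 \<le> b"
  shows "n \<in> A_set b \<longleftrightarrow> (\<exists>k. b ^ k \<le> n \<and> n < 2 * b ^ k)"
proof
  assume "n \<in> A_set b"
  then have "1 \<le> n" and digit: "leading_digit b n = 1"
    by (auto simp: A_set_def)
  then obtain k where k: "b ^ k \<le> n" "n < b ^ Suc k"
    using ex_power_ivl1[OF assms] by auto
  have "n div b ^ k < 2"
    using digit leading_digit_eq[OF assms k] by simp
  then have "n < 2 * b ^ k"
    using assms by (simp add: div_less_iff_less_mult)
  with k show "\<exists>k. b ^ k \<le> n \<and> n < 2 * b ^ k" by blast
next
  assume "\<exists>k. b ^ k \<le> n \<and> n < 2 * b ^ k"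
  then obtain k where k: "b ^ k \<le> n" "n < 2 * b ^ k" by blast
  have "2 * b ^ k \<le> b ^ Suc k"
    using assms by simp
  then have "n < b ^ Suc k"
    using k by linarith
  then have "leading_digit b n = n div b ^ k"
    using leading_digit_eq[OF assms k(1)] by simp
  also have "\<dots> = 1"
  proof -
    have "0 < b ^ k"
      using assms by simp
    then have "1 \<le> n div b ^ k" "n div b ^ k < 2"
      using k div_le_mono[OF k(1), of "b ^ k"] by (simp_all add: div_less_iff_less_mult)
    then show ?thesis
      by simp
  qed
  finally show "n \<in> A_set b"
    using k assms by (simp add: A_set_def)
qed

lemma power_mem_A_set:
  fixes b k :: nat
  assumes "2 \<le> b"
  shows "b ^ k \<in> A_set b"
  using assms by (auto simp: mem_A_set_iff)

lemma mult_base_mem_A_set: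
  fixes b n :: nat
  assumes "2 \<le> b" "n \<in> A_set b"
  shows "b * n \<in> A_set b"
proof -
  obtain k where "b ^ k \<le> n" "n < 2 * b ^ k"
    using assms by (auto simp: mem_A_set_iff)
  then have "b ^ Suc k \<le> b * n" "b * n < 2 * b ^ Suc k"
    using assms(1) by auto
  then show ?thesis
    using assms(1) mem_A_set_iff by blast
qed

lemma ratio_set_A_set_gap:
  fixes b :: nat
  assumes b: "2 \<le> b" and r: "r \<in> ratio_set (A_set b)"
  shows "r \<le> 2 \<or> real b / 2 \<le> r"
proof -
  obtain a a' where r_eq: "r = real a / real a'" and "a \<in> A_set b" "a' \<in> A_set b"
    using r by (auto simp: ratio_set_def)
  then obtain m n where m: "b ^ m \<le> a" "a < 2 * b ^ m" and n: "b ^ n \<le> a'" "a' < 2 * b ^ n"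
    using b by (auto simp: mem_A_set_iff)
  have "0 < b ^ n"
    using b by simp
  then have "0 < real a'"
    using n by simp
  show ?thesis
  proof (cases "m \<le> n")
    case True
    then have "b ^ m \<le> b ^ n"
      using b by (simp add: power_increasing)
    then have "real a \<le> 2 * real a'"
      using m n by linarith
    then show ?thesis
      using \<open>0 < real a'\<close> by (simp add: r_eq divide_le_eq)
  next
    case False
    then have "b * b ^ n \<le> b ^ m"
      using b power_increasing[of "Suc n" m b] by simp
    moreover have "b * a' \<le> b * (2 * b ^ n)"
      using n by simp
    ultimately have "b * a' \<le> 2 * a"
      using m by linarith
    then have "real b * real a' \<le> 2 * real a"
      by (metis of_nat_le_iff of_nat_mult of_nat_numeral)
    then show ?thesis
      using \<open>0 < real a'\<close> by (simp add: r_eq le_divide_eq)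
  qed
qed

lemma ratio_set_nonneg: "ratio_set A \<subseteq> {0..}"
  by (auto simp: ratio_set_def)

lemma inverse_mem_ratio_set:
  assumes "r \<in> ratio_set A"
  shows "inverse r \<in> ratio_set A"
  using assms unfolding ratio_set_def by fastforce

lemma mult_mem_ratio_set:
  assumes "\<And>a. a \<in> A \<Longrightarrow> m * a \<in> A" and "r \<in> ratio_set A"
  shows "real m * r \<in> ratio_set A"
proof -
  obtain a a' where "r = real a / real a'" "a \<in> A" "a' \<in> A"
    using assms(2) by (auto simp: ratio_set_def)
  then have "real m * r = real (m * a) / real a'" "m * a \<in> A"
    using assms(1) by auto
  with \<open>a' \<in> A\<close> show ?thesis
    unfolding ratio_set_def by blast
qed

lemma inverse_mem_closure_ratio_set:
  assumes "x \<in> closure (ratio_set A)"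
  shows "inverse x \<in> closure (ratio_set A)"
proof (cases "x = 0")
  case True
  with assms show ?thesis by simp
next
  case False
  obtain f where f: "\<And>n. f n \<in> ratio_set A" "f \<longlonglongrightarrow> x"
    using assms unfolding closure_sequential by blast
  have "(\<lambda>n. inverse (f n)) \<longlonglongrightarrow> inverse x"
    using f(2) False by (rule tendsto_inverse)
  moreover have "inverse (f n) \<in> ratio_set A" for n
    using f(1) by (rule inverse_mem_ratio_set)
  ultimately show ?thesis
    unfolding closure_sequential by (intro exI[of _ "\<lambda>n. inverse (f n)"]) blast
qed

lemma mult_mem_closure_ratio_set:
  assumes "\<And>a. a \<in> A \<Longrightarrow> m * a \<in> A" and "x \<in> closure (ratio_set A)"
  shows "real m * x \<in> closure (ratio_set A)"
proof -
  have "(*) (real m) ` ratio_set A \<subseteq> closure (ratio_set A)"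
    using mult_mem_ratio_set[OF assms(1)] closure_subset by blast
  then have "(*) (real m) ` closure (ratio_set A) \<subseteq> closure (ratio_set A)"
    by (intro image_closure_subset continuous_intros) auto
  with assms(2) show ?thesis
    by blast
qed

lemma A_set_ratios_dense_in_1_2:
  fixes b :: nat
  assumes b: "2 \<le> b"
  shows "{1..2} \<subseteq> closure (ratio_set (A_set b))"
proof -
  have "y \<in> closure (ratio_set (A_set b))" if y: "1 \<le> y" "y < 2" for y :: real
    unfolding closure_approachable
  proof (intro allI impI)
    fix e :: real
    assume "0 < e"
    obtain n where n: "1 / e < real b ^ n"
      using real_arch_pow[of "real b" "1 / e"] b by auto
    define B where "B = b ^ n"
    define N where "N = nat \<lfloor>y * B\<rfloor>"
    have "0 < real B"
      using b by (simp add: B_def)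
    then have "real B \<le> y * B" "y * B < 2 * B"
      using y by simp_all
    then have floor: "real N \<le> y * B" "y * B < real N + 1"
      unfolding N_def by linarith+
    have "B \<le> N" "N < 2 * B"
      using floor \<open>real B \<le> y * B\<close> \<open>y * B < 2 * B\<close> by linarith+
    then have "N \<in> A_set b"
      using b mem_A_set_iff unfolding B_def by blast
    moreover have "B \<in> A_set b"
      using b by (simp add: B_def power_mem_A_set)
    ultimately have "real N / real B \<in> ratio_set (A_set b)"
      unfolding ratio_set_def by blast
    moreover have "dist (real N / real B) y < e"
    proof -
      have "dist (real N / real B) y = (y * B - real N) / B"
        using floor \<open>0 < real B\<close> by (simp add: dist_real_def field_simps)
      also have "\<dots> < 1 / B"
        using floor \<open>0 < real B\<close> by (simp add: divide_strict_right_mono)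
      also have "\<dots> < e"
        using n \<open>0 < e\<close> \<open>0 < real B\<close> by (simp add: B_def field_simps)
      finally show ?thesis .
    qed
    ultimately show "\<exists>r \<in> ratio_set (A_set b). dist r y < e"
      by blast
  qed
  then have "{1..<2} \<subseteq> closure (ratio_set (A_set b))"
    by auto
  from closure_minimal[OF this closed_closure] show ?thesis
    by simp
qed

lemma atLeast_subset_if_mult_closed:
  fixes S :: "real set"
  assumes "0 < a" "1 < c" "{a..c * a} \<subseteq> S" "\<And>x. x \<in> S \<Longrightarrow> c * x \<in> S"
  shows "{a..} \<subseteq> S"
proof -
  have "{a..c ^ Suc k * a} \<subseteq> S" for k
  proof (induction k)
    case 0
    with assms(3) show ?case
      by simp
  next
    case (Suc k)
    show ?case
    proof
      fix y
      assume y: "y \<in> {a..c ^ Suc (Suc k) * a}"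
      show "y \<in> S"
      proof (cases "y \<le> c ^ Suc k * a")
        case True
        with Suc y show ?thesis
          by auto
      next
        case False
        have "a \<le> c ^ k * a"
          using assms(1,2) by simp
        then have "c * a \<le> c ^ Suc k * a"
          using assms(2) by (simp add: mult.assoc)
        with False y assms(2) have "y / c \<in> {a..c ^ Suc k * a}"
          by (simp add: field_simps)
        with Suc assms(4) have "c * (y / c) \<in> S"
          by blast
        with assms(2) show ?thesis
          by simp
      qed
    qed
  qed
  moreover have "\<exists>k. x \<le> c ^ Suc k * a" for x
  proof -
    obtain k where "x / a < c ^ k"
      using real_arch_pow[OF assms(2)] by blast
    then have "x \<le> c ^ k * a"
      using assms(1) by (simp add: divide_less_eq)
    also have "\<dots> \<le> c ^ Suc k * a"
      using assms(1,2) by simp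
    finally show ?thesis ..
  qed
  ultimately show ?thesis
    by fastforce
qed

lemma fractionally_dense_if_atLeast_1_subset:
  assumes "{1..} \<subseteq> closure (ratio_set A)"
  shows "fractionally_dense A"
proof -
  have "{0<..} \<subseteq> closure (ratio_set A)"
  proof
    fix x :: real
    assume "x \<in> {0<..}"
    show "x \<in> closure (ratio_set A)"
    proof (cases "1 \<le> x")
      case True
      with assms show ?thesis
        by auto
    next
      case False
      with \<open>x \<in> {0<..}\<close> have "1 \<le> inverse x"
        by (simp add: one_le_inverse)
      with assms have "inverse x \<in> closure (ratio_set A)"
        by auto
      then have "inverse (inverse x) \<in> closure (ratio_set A)"
        by (rule inverse_mem_closure_ratio_set)
      then show ?thesis
        by simp
    qed
  qed
  from closure_minimal[OF this closed_closure]
  have "{0..} \<subseteq> closure (ratio_set A)"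
    by simp
  moreover have "closure (ratio_set A) \<subseteq> {0..}"
    using ratio_set_nonneg by (rule closure_minimal) simp
  ultimately show ?thesis
    unfolding fractionally_dense_def by blast
qed

lemma fractionally_dense_A_set:
  fixes b :: nat
  assumes "2 \<le> b" "b \<le> 4"
  shows "fractionally_dense (A_set b)"
proof -
  define S where "S = closure (ratio_set (A_set b))"
  have "{1..2} \<subseteq> S"
    using A_set_ratios_dense_in_1_2[OF assms(1)] by (simp add: S_def)
  have "{1/2..2} \<subseteq> S"
  proof
    fix x :: real
    assume x: "x \<in> {1/2..2}"
    show "x \<in> S"
    proof (cases "1 \<le> x")
      case True
      with x \<open>{1..2} \<subseteq> S\<close> show ?thesis
        by auto
    next
      case False
      with x have "inverse x \<in> {1..2}"
        by (auto simp: field_simps)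
      with \<open>{1..2} \<subseteq> S\<close> have "inverse (inverse x) \<in> S"
        unfolding S_def by (blast intro: inverse_mem_closure_ratio_set)
      then show ?thesis
        by simp
    qed
  qed
  moreover have "real b * (1/2) \<le> 2"
    using assms(2) by simp
  ultimately have "{1/2..real b * (1/2)} \<subseteq> S"
    by auto
  moreover have "real b * x \<in> S" if "x \<in> S" for x
    using that mult_base_mem_A_set[OF assms(1)] mult_mem_closure_ratio_set
    unfolding S_def by blast
  ultimately have "{1/2..} \<subseteq> S"
    using assms(1) by (intro atLeast_subset_if_mult_closed) auto
  then show ?thesis
    unfolding S_def by (intro fractionally_dense_if_atLeast_1_subset) auto
qed

lemma not_fractionally_dense_A_set:
  fixes b :: nat
  assumes "5 \<le> b"
  shows "\<not> fractionally_dense (A_set b)"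
proof
  assume "fractionally_dense (A_set b)"
  then have "9/4 \<in> closure (ratio_set (A_set b))"
    by (simp add: fractionally_dense_def)
  moreover have "ratio_set (A_set b) \<subseteq> {..2} \<union> {real b / 2..}"
    using ratio_set_A_set_gap[of b] assms by fastforce
  then have "closure (ratio_set (A_set b)) \<subseteq> {..2} \<union> {real b / 2..}"
    by (intro closure_minimal closed_Un) auto
  moreover have "9/4 < real b / 2"
    using assms by simp
  ultimately show False
    by auto
qed

theorem mainTheorem1:
  fixes b :: nat
  assumes "b \<ge> 2"
  shows "(b \<in> {2, 3, 4} \<longrightarrow> fractionally_dense (A_set b)) \<and>
         (b \<ge> 5 \<longrightarrow> \<not> fractionally_dense (A_set b))"
  using fractionally_dense_A_set[OF assms] not_fractionally_dense_A_set by auto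

end
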